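(* For every finite set $\Omega$ with $|\Omega|\ge2$, every $\varepsilon>0$ and all integers $k,l\ge1$ there exist $\delta>0$ and $n_0>0$ such that for all $n>n_0$ and all $\mu,\nu\in\mathcal P(\Omega^n)$ with $D_\square(\mu,\nu)<\delta$, every $(k,l)$-intensive observable $f$ satisfies $\big|\langle f(\sigma^{(1)},\dots,\sigma^{(k)})\rangle_\mu-\langle f(\sigma^{(1)},\dots,\sigma^{(k)})\rangle_\nu\big|<\varepsilon$.
   Context: $\mathcal P(\mathcal X)$ denotes the set of probability measures on a finite set $\mathcal X$; $[n]=\{1,\dots,n\}$. A function $f:(\Omega^n)^k\to[0,1]$ is a $(k,l)$-intensive observable if there exist $I_1,\dots,I_l\subset[n]$ and $\tau^{(j)}_1,\dots,\tau^{(j)}_l\in\Omega$ for $j=1,\dots,k$ such that $f(\sigma^{(1)},\dots,\sigma^{(k)})=\frac1{n^l}\sum_{i_1\in I_1,\dots,i_l\in I_l}\prod_{j=1}^k\mathbf 1\{\sigma^{(j)}_{i_1}=\tau^{(j)}_1,\dots,\sigma^{(j)}_{i_l}=\tau^{(j)}_l\}$. For $\mu\in\mathcal P(\Omega^n)$, $\langle f(\sigma^{(1)},\dots,\sigma^{(k)})\rangle_\mu=\sum_{\sigma^{(1)},\dots,\sigma^{(k)}}f(\sigma^{(1)},\dots,\sigma^{(k)})\prod_{j=1}^k\mu(\sigma^{(j)})$ is the expectation over $k$ independent samples from $\mu$. For $\mu,\nu\in\mathcal P(\Omega^n)$ let $\Gamma(\mu,\nu)$ be the set of couplings, i.e. probability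 measures $\gamma$ on $\Omega^n\times\Omega^n$ whose first and second marginals are $\mu$ and $\nu$. The cut metric is $D_\square(\mu,\nu)=\frac1n\min_{\gamma\in\Gamma(\mu,\nu)}\max_{I\subset[n],\,B\subset\Omega^n\times\Omega^n,\,\omega\in\Omega}\Big|\sum_{i\in I}\sum_{(\sigma,\tau)\in B}\gamma(\sigma,\tau)\big(\mathbf 1\{\sigma_i=\omega\}-\mathbf 1\{\tau_i=\omega\}\big)\Big|$. *)

theory Defs
  imports Complex_Main "HOL-Library.FuncSet" "HOL-Library.Cardinality"
begin

text \<open>Configurations in Omega^n, with [n] rendered as {0..<n}; coordinates outside
  [n] are fixed to undefined (PiE).\<close>
definition configs :: "nat \<Rightarrow> (nat \<Rightarrow> 'a) set" where
  "configs n = PiE {..<n} (\<lambda>_. UNIV)"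

definition is_prob :: "nat \<Rightarrow> ((nat \<Rightarrow> 'a) \<Rightarrow> real) \<Rightarrow> bool" where
  "is_prob n \<mu> \<longleftrightarrow> (\<forall>\<sigma>\<in>configs n. 0 \<le> \<mu> \<sigma>) \<and> sum \<mu> (configs n) = 1"

definition couplings :: "nat \<Rightarrow> ((nat \<Rightarrow> 'a) \<Rightarrow> real) \<Rightarrow> ((nat \<Rightarrow> 'a) \<Rightarrow> real)
    \<Rightarrow> (((nat \<Rightarrow> 'a) \<times> (nat \<Rightarrow> 'a)) \<Rightarrow> real) set" where
  "couplings n \<mu> \<nu> = {\<gamma>. (\<forall>p\<in>configs n \<times> configs n. 0 \<le> \<gamma> p)
      \<and> (\<forall>\<sigma>\<in>configs n. (\<Sum>\<tau>\<in>configs n. \<gamma> (\<sigma>, \<tau>)) = \<mu> \<sigma>)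
      \<and> (\<forall>\<tau>\<in>configs n. (\<Sum>\<sigma>\<in>configs n. \<gamma> (\<sigma>, \<tau>)) = \<nu> \<tau>)}"

definition cut_disc :: "nat \<Rightarrow> (((nat \<Rightarrow> 'a) \<times> (nat \<Rightarrow> 'a)) \<Rightarrow> real) \<Rightarrow> real" where
  "cut_disc n \<gamma> = Max {\<bar>\<Sum>i\<in>I. \<Sum>p\<in>B. \<gamma> p *
        ((if fst p i = \<omega> then 1 else 0) - (if snd p i = \<omega> then 1 else 0))\<bar>
      | I B \<omega>. I \<subseteq> {..<n} \<and> B \<subseteq> configs n \<times> configs n}"

text \<open>Cut metric; the minimum over couplings is attained, so Inf equals min.\<close>
definition cut_dist :: "nat \<Rightarrow> ((nat \<Rightarrow> 'a) \<Rightarrow> real) \<Rightarrow> ((nat \<Rightarrow> 'a) \<Rightarrow> real) \<Rightarrow> real" where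
  "cut_dist n \<mu> \<nu> = (1 / real n) * (INF \<gamma>\<in>couplings n \<mu> \<nu>. cut_disc n \<gamma>)"

definition tuples :: "nat \<Rightarrow> nat \<Rightarrow> (nat \<Rightarrow> nat \<Rightarrow> 'a) set" where
  "tuples n k = PiE {..<k} (\<lambda>_. configs n)"

definition intensive_obs :: "nat \<Rightarrow> nat \<Rightarrow> nat \<Rightarrow> ((nat \<Rightarrow> nat \<Rightarrow> 'a) \<Rightarrow> real) \<Rightarrow> bool" where
  "intensive_obs n k l f \<longleftrightarrow> (\<exists>(I :: nat \<Rightarrow> nat set) (\<tau> :: nat \<Rightarrow> nat \<Rightarrow> 'a).
      (\<forall>m<l. I m \<subseteq> {..<n}) \<and>
      (\<forall>\<sigma>\<in>tuples n k. f \<sigma> = (1 / real n ^ l) *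
         (\<Sum>i\<in>PiE {..<l} I. \<Prod>j<k. (if (\<forall>m<l. \<sigma> j (i m) = \<tau> j m) then 1 else 0))))"

definition expect :: "nat \<Rightarrow> nat \<Rightarrow> ((nat \<Rightarrow> 'a) \<Rightarrow> real) \<Rightarrow> ((nat \<Rightarrow> nat \<Rightarrow> 'a) \<Rightarrow> real) \<Rightarrow> real" where
  "expect n k \<mu> f = (\<Sum>\<sigma>\<in>tuples n k. f \<sigma> * (\<Prod>j<k. \<mu> (\<sigma> j)))"

end

theory Submission
  imports Defs
begin

text \<open>Both expectations factor through the pattern probabilities
  \<open>P\<^sub>\<mu>(i, t) = \<mu>{\<sigma>. \<forall>m<l. \<sigma> (i m) = t m}\<close>, namely
  \<open>\<langle>f\<rangle>\<^sub>\<mu> = n\<^sup>-\<^sup>l \<Sum>\<^sub>i \<Prod>\<^sub>j<k P\<^sub>\<mu>(i, \<tau> j)\<close>. Telescoping the product over \<open>j\<close> (all factors lie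
  in \<open>[0,1]\<close>) and then, along a coupling \<open>\<gamma>\<close>, the pattern over \<open>m\<close> writes
  \<open>\<langle>f\<rangle>\<^sub>\<mu> - \<langle>f\<rangle>\<^sub>\<nu>\<close> as \<open>k l\<close> sums. Once every index except \<open>i m\<close> is fixed, such a sum is a
  \<open>[0,1]\<close>-weighted combination of cut sums of \<open>\<gamma>\<close> over one fixed set of pairs, hence at most
  the cut discrepancy of \<open>\<gamma>\<close>. This gives \<open>|\<langle>f\<rangle>\<^sub>\<mu> - \<langle>f\<rangle>\<^sub>\<nu>| \<le> k l D\<^sub>\<box>(\<mu>, \<nu>)\<close> for every \<open>n\<close>,
  so \<open>\<delta> = \<epsilon> / (k l)\<close> works.\<close>

lemma prod_lessThan_diff_telescope:
  fixes a b :: "nat \<Rightarrow> 'a::comm_ring_1"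
  shows "(\<Prod>j<k. a j) - (\<Prod>j<k. b j) =
         (\<Sum>j<k. (\<Prod>j'<j. b j') * (a j - b j) * (\<Prod>j'\<in>{j<..<k}. a j'))"
proof (induction k)
  case 0
  show ?case by simp
next
  case (Suc k)
  have "(\<Prod>j'\<in>{j<..<Suc k}. a j') = (\<Prod>j'\<in>{j<..<k}. a j') * a k" if "j < k" for j
  proof -
    have "{j<..<Suc k} = insert k {j<..<k}"
      using that by auto
    then show ?thesis by simp
  qed
  moreover have "{k<..<Suc k} = {}"
    by auto
  ultimately have "(\<Sum>j<Suc k. (\<Prod>j'<j. b j') * (a j - b j) * (\<Prod>j'\<in>{j<..<Suc k}. a j'))
     = (\<Sum>j<k. (\<Prod>j'<j. b j') * (a j - b j) * (\<Prod>j'\<in>{j<..<k}. a j')) * a k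
       + (\<Prod>j'<k. b j') * (a k - b k)"
    by (simp add: sum_distrib_right mult.assoc)
  also have "\<dots> = (\<Prod>j<Suc k. a j) - (\<Prod>j<Suc k. b j)"
    using Suc.IH by (simp add: algebra_simps)
  finally show ?case ..
qed

lemma prod_of_bool:
  "finite A \<Longrightarrow> (\<Prod>x\<in>A. of_bool (P x)) = (of_bool (\<forall>x\<in>A. P x) :: 'a::comm_semiring_1)"
  by (induction A rule: finite_induct) auto

lemma abs_sum_weighted_le:
  fixes X c :: "'b \<Rightarrow> real"
  assumes "finite J" and c: "\<And>y. y \<in> J \<Longrightarrow> 0 \<le> c y \<and> c y \<le> 1"
    and D: "\<And>J'. J' \<subseteq> J \<Longrightarrow> \<bar>sum X J'\<bar> \<le> D"
  shows "\<bar>\<Sum>y\<in>J. c y * X y\<bar> \<le> D"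
proof -
  define Jp where "Jp = {y\<in>J. X y > 0}"
  define Jn where "Jn = {y\<in>J. X y \<le> 0}"
  have split: "(\<Sum>y\<in>J. c y * X y) = (\<Sum>y\<in>Jp. c y * X y) + (\<Sum>y\<in>Jn. c y * X y)"
    using \<open>finite J\<close> by (subst sum.union_disjoint[symmetric]) (auto simp: Jp_def Jn_def intro: sum.cong)
  have "0 \<le> (\<Sum>y\<in>Jp. c y * X y)" "(\<Sum>y\<in>Jp. c y * X y) \<le> sum X Jp"
    using c by (auto simp: Jp_def intro!: sum_nonneg sum_mono mult_left_le_one_le)
  moreover have "(\<Sum>y\<in>Jn. c y * X y) \<le> 0" "sum X Jn \<le> (\<Sum>y\<in>Jn. c y * X y)"
    using c by (auto simp: Jn_def intro!: sum_nonpos sum_mono mult_nonneg_nonpos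
        mult_left_le_one_le[of "- X _", simplified])
  moreover have "\<bar>sum X Jp\<bar> \<le> D" "\<bar>sum X Jn\<bar> \<le> D"
    using D by (auto simp: Jp_def Jn_def)
  ultimately show ?thesis
    using split by linarith
qed

lemma sum_PiE_remove:
  assumes "m \<in> S"
  shows "sum F (PiE S I) = (\<Sum>g\<in>PiE (S - {m}) I. \<Sum>y\<in>I m. F (g(m := y)))"
proof -
  have S: "S = insert m (S - {m})"
    using assms by auto
  have "sum F (PiE S I) = sum (F \<circ> (\<lambda>(y, g). g(m := y))) (I m \<times> PiE (S - {m}) I)"
    by (subst S, subst PiE_insert_eq) (simp add: sum.reindex inj_combinator)
  also have "\<dots> = (\<Sum>y\<in>I m. \<Sum>g\<in>PiE (S - {m}) I. F (g(m := y)))"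
    by (simp add: sum.cartesian_product split_def)
  also have "\<dots> = (\<Sum>g\<in>PiE (S - {m}) I. \<Sum>y\<in>I m. F (g(m := y)))"
    by (rule sum.swap)
  finally show ?thesis .
qed

lemma card_PiE_le_power:
  assumes "finite S" "\<And>m. m \<in> S \<Longrightarrow> card (I m) \<le> c"
  shows "card (PiE S I) \<le> c ^ card S"
proof -
  have "card (PiE S I) = (\<Prod>m\<in>S. card (I m))"
    using assms(1) by (rule card_PiE)
  also have "\<dots> \<le> (\<Prod>m\<in>S. c)"
    by (intro prod_mono) (simp add: assms(2))
  finally show ?thesis
    by simp
qed

lemma finite_configs: "finite (configs n :: (nat \<Rightarrow> 'a::finite) set)"
  unfolding configs_def by (rule finite_PiE) auto

lemma product_coupling:
  assumes "is_prob n \<mu>" "is_prob n \<nu>"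
  shows "(\<lambda>p. \<mu> (fst p) * \<nu> (snd p)) \<in> couplings n \<mu> \<nu>"
  using assms unfolding couplings_def is_prob_def
  by (auto simp flip: sum_distrib_left sum_distrib_right)

lemma coupling_sum_fst:
  assumes "\<gamma> \<in> couplings n \<mu> \<nu>"
  shows "(\<Sum>\<sigma>\<in>configs n. \<mu> \<sigma> * g \<sigma>) = (\<Sum>p\<in>configs n \<times> configs n. \<gamma> p * g (fst p))"
proof -
  have "(\<Sum>\<sigma>\<in>configs n. \<mu> \<sigma> * g \<sigma>) = (\<Sum>\<sigma>\<in>configs n. \<Sum>\<tau>\<in>configs n. \<gamma> (\<sigma>, \<tau>) * g \<sigma>)"
    using assms unfolding couplings_def by (auto simp flip: sum_distrib_right intro!: sum.cong)
  then show ?thesis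
    by (simp add: sum.cartesian_product split_def)
qed

lemma coupling_sum_snd:
  assumes "\<gamma> \<in> couplings n \<mu> \<nu>"
  shows "(\<Sum>\<tau>\<in>configs n. \<nu> \<tau> * g \<tau>) = (\<Sum>p\<in>configs n \<times> configs n. \<gamma> p * g (snd p))"
proof -
  have "(\<Sum>\<tau>\<in>configs n. \<nu> \<tau> * g \<tau>) = (\<Sum>\<tau>\<in>configs n. \<Sum>\<sigma>\<in>configs n. \<gamma> (\<sigma>, \<tau>) * g \<tau>)"
    using assms unfolding couplings_def by (auto simp flip: sum_distrib_right intro!: sum.cong)
  also have "\<dots> = (\<Sum>\<sigma>\<in>configs n. \<Sum>\<tau>\<in>configs n. \<gamma> (\<sigma>, \<tau>) * g \<tau>)"
    by (rule sum.swap)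
  finally show ?thesis
    by (simp add: sum.cartesian_product split_def)
qed

lemma is_prob_sum_mult_bounds:
  assumes "is_prob n \<mu>" and g: "\<And>\<sigma>. \<sigma> \<in> configs n \<Longrightarrow> 0 \<le> g \<sigma> \<and> g \<sigma> \<le> 1"
  shows "0 \<le> (\<Sum>\<sigma>\<in>configs n. \<mu> \<sigma> * g \<sigma>) \<and> (\<Sum>\<sigma>\<in>configs n. \<mu> \<sigma> * g \<sigma>) \<le> 1"
proof -
  have "(\<Sum>\<sigma>\<in>configs n. \<mu> \<sigma> * g \<sigma>) \<le> sum \<mu> (configs n)"
    using assms unfolding is_prob_def by (intro sum_mono) (simp add: mult_left_le)
  moreover have "0 \<le> (\<Sum>\<sigma>\<in>configs n. \<mu> \<sigma> * g \<sigma>)"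
    using assms unfolding is_prob_def by (intro sum_nonneg) simp
  ultimately show ?thesis
    using assms unfolding is_prob_def by simp
qed

definition spin_diff :: "'a \<Rightarrow> nat \<Rightarrow> (nat \<Rightarrow> 'a) \<times> (nat \<Rightarrow> 'a) \<Rightarrow> real" where
  "spin_diff \<omega> i p = of_bool (fst p i = \<omega>) - of_bool (snd p i = \<omega>)"

definition cut_sum :: "nat set \<Rightarrow> ((nat \<Rightarrow> 'a) \<times> (nat \<Rightarrow> 'a)) set \<Rightarrow> 'a
    \<Rightarrow> (((nat \<Rightarrow> 'a) \<times> (nat \<Rightarrow> 'a)) \<Rightarrow> real) \<Rightarrow> real" where
  "cut_sum I B \<omega> \<gamma> = (\<Sum>i\<in>I. \<Sum>p\<in>B. \<gamma> p * spin_diff \<omega> i p)"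

lemma abs_cut_sum_le_cut_disc:
  fixes \<gamma> :: "((nat \<Rightarrow> 'a::finite) \<times> (nat \<Rightarrow> 'a)) \<Rightarrow> real"
  assumes "I \<subseteq> {..<n}" "B \<subseteq> configs n \<times> configs n"
  shows "\<bar>cut_sum I B \<omega> \<gamma>\<bar> \<le> cut_disc n \<gamma>"
proof -
  let ?h = "\<lambda>(I, B, \<omega>). \<bar>cut_sum I B \<omega> \<gamma>\<bar>"
  have eq: "cut_disc n \<gamma> = Max (?h ` (Pow {..<n} \<times> Pow (configs n \<times> configs n) \<times> UNIV))"
    unfolding cut_disc_def cut_sum_def spin_diff_def of_bool_def by (rule arg_cong[of _ _ Max]) (auto simp: image_def)
  show ?thesis
    unfolding eq
  proof (rule Max_ge)
    show "finite (?h ` (Pow {..<n} \<times> Pow (configs n \<times> configs n) \<times> UNIV))"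
      by (intro finite_imageI finite_cartesian_product finite_Pow_iff[THEN iffD2] finite_configs) auto
    show "\<bar>cut_sum I B \<omega> \<gamma>\<bar> \<in> ?h ` (Pow {..<n} \<times> Pow (configs n \<times> configs n) \<times> UNIV)"
      using assms by (intro image_eqI[where x="(I, B, \<omega>)"]) auto
  qed
qed

lemma cut_disc_nonneg: "0 \<le> cut_disc n (\<gamma> :: ((nat \<Rightarrow> 'a::finite) \<times> (nat \<Rightarrow> 'a)) \<Rightarrow> real)"
  using abs_cut_sum_le_cut_disc[where I="{}" and B="{}" and \<gamma>=\<gamma>] by (simp add: cut_sum_def)

definition match_ind :: "nat set \<Rightarrow> (nat \<Rightarrow> nat) \<Rightarrow> (nat \<Rightarrow> 'a) \<Rightarrow> (nat \<Rightarrow> 'a) \<Rightarrow> real" where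
  "match_ind M i t \<sigma> = (\<Prod>m\<in>M. of_bool (\<sigma> (i m) = t m))"

lemma match_ind_eq_of_bool: "finite M \<Longrightarrow> match_ind M i t \<sigma> = of_bool (\<forall>m\<in>M. \<sigma> (i m) = t m)"
  unfolding match_ind_def by (rule prod_of_bool)

definition pattern_prob :: "nat \<Rightarrow> nat \<Rightarrow> ((nat \<Rightarrow> 'a) \<Rightarrow> real) \<Rightarrow> (nat \<Rightarrow> nat) \<Rightarrow> (nat \<Rightarrow> 'a) \<Rightarrow> real" where
  "pattern_prob n l \<mu> i t = (\<Sum>\<sigma>\<in>configs n. \<mu> \<sigma> * match_ind {..<l} i t \<sigma>)"

lemma pattern_prob_bounds: "is_prob n \<mu> \<Longrightarrow> 0 \<le> pattern_prob n l \<mu> i t \<and> pattern_prob n l \<mu> i t \<le> 1"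
  unfolding pattern_prob_def by (rule is_prob_sum_mult_bounds) (simp_all add: match_ind_eq_of_bool)

text \<open>The \<open>m\<close>-th step of telescoping a pattern along a coupled pair \<open>p = (\<sigma>, \<sigma>')\<close>:
  positions before \<open>m\<close> are read from \<open>\<sigma>'\<close>, positions after \<open>m\<close> from \<open>\<sigma>\<close>.\<close>
definition hybrid_ind :: "nat \<Rightarrow> nat \<Rightarrow> (nat \<Rightarrow> nat) \<Rightarrow> (nat \<Rightarrow> 'a) \<Rightarrow> (nat \<Rightarrow> 'a) \<times> (nat \<Rightarrow> 'a) \<Rightarrow> real" where
  "hybrid_ind l m i t p = match_ind {..<m} i t (snd p) * match_ind {m<..<l} i t (fst p)"

lemma pattern_prob_diff_eq:
  assumes "\<gamma> \<in> couplings n \<mu> \<nu>"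
  shows "pattern_prob n l \<mu> i t - pattern_prob n l \<nu> i t =
    (\<Sum>m<l. \<Sum>p\<in>configs n \<times> configs n. \<gamma> p * hybrid_ind l m i t p * spin_diff (t m) (i m) p)"
proof -
  have "pattern_prob n l \<mu> i t - pattern_prob n l \<nu> i t = (\<Sum>p\<in>configs n \<times> configs n.
      \<gamma> p * (match_ind {..<l} i t (fst p) - match_ind {..<l} i t (snd p)))"
    unfolding pattern_prob_def coupling_sum_fst[OF assms] coupling_sum_snd[OF assms]
    by (simp add: sum_subtractf right_diff_distrib)
  also have "\<dots> = (\<Sum>p\<in>configs n \<times> configs n. \<Sum>m<l.
      \<gamma> p * hybrid_ind l m i t p * spin_diff (t m) (i m) p)"
    unfolding hybrid_ind_def spin_diff_def match_ind_def prod_lessThan_diff_telescope sum_distrib_left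
    by (intro sum.cong refl) (simp add: algebra_simps)
  also have "\<dots> = (\<Sum>m<l. \<Sum>p\<in>configs n \<times> configs n.
      \<gamma> p * hybrid_ind l m i t p * spin_diff (t m) (i m) p)"
    by (rule sum.swap)
  finally show ?thesis .
qed

lemma abs_hybrid_sum_le:
  fixes \<gamma> :: "((nat \<Rightarrow> 'a::finite) \<times> (nat \<Rightarrow> 'a)) \<Rightarrow> real" and A :: "(nat \<Rightarrow> nat) \<Rightarrow> real"
  assumes I: "\<And>m'. m' < l \<Longrightarrow> I m' \<subseteq> {..<n}" and "m < l"
    and A: "\<And>i. 0 \<le> A i \<and> A i \<le> 1"
  shows "\<bar>\<Sum>i\<in>PiE {..<l} I. A i *
      (\<Sum>p\<in>configs n \<times> configs n. \<gamma> p * hybrid_ind l m i t p * spin_diff (t m) (i m) p)\<bar>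
    \<le> real n ^ (l - 1) * cut_disc n \<gamma>"
proof -
  let ?C = "configs n \<times> configs n :: ((nat \<Rightarrow> 'a) \<times> (nat \<Rightarrow> 'a)) set"
  let ?R = "PiE ({..<l} - {m}) I"
  have hybrid_upd: "hybrid_ind l m (g(m := y)) t p = hybrid_ind l m g t p" for g y p
    unfolding hybrid_ind_def match_ind_def by (intro arg_cong2[where f="(*)"] prod.cong) auto
  txt \<open>With the positions other than \<open>m\<close> fixed to \<open>g\<close>, the hybrid indicator selects a fixed
    set \<open>B\<close> of pairs, so summing over \<open>y = i m\<close> gives a weighted cut sum.\<close>
  have inner: "\<bar>\<Sum>y\<in>I m. A (g(m := y)) *
      (\<Sum>p\<in>?C. \<gamma> p * hybrid_ind l m g t p * spin_diff (t m) y p)\<bar> \<le> cut_disc n \<gamma>" for g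
  proof (rule abs_sum_weighted_le)
    show "finite (I m)"
      using I[OF \<open>m < l\<close>] finite_subset by blast
    show "0 \<le> A (g(m := y)) \<and> A (g(m := y)) \<le> 1" for y
      using A .
    define B where "B = {p\<in>?C. (\<forall>m'\<in>{..<m}. snd p (g m') = t m') \<and> (\<forall>m'\<in>{m<..<l}. fst p (g m') = t m')}"
    have "B \<subseteq> ?C"
      unfolding B_def by blast
    have restrict: "(\<Sum>p\<in>?C. \<gamma> p * hybrid_ind l m g t p * spin_diff (t m) y p)
        = (\<Sum>p\<in>B. \<gamma> p * spin_diff (t m) y p)" for y
      unfolding B_def hybrid_ind_def match_ind_eq_of_bool[OF finite_lessThan]
        match_ind_eq_of_bool[OF finite_greaterThanLessThan]
      by (auto simp: sum.inter_filter finite_configs intro!: sum.cong)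
    show "\<bar>\<Sum>y\<in>J. \<Sum>p\<in>?C. \<gamma> p * hybrid_ind l m g t p * spin_diff (t m) y p\<bar> \<le> cut_disc n \<gamma>"
      if "J \<subseteq> I m" for J
      using abs_cut_sum_le_cut_disc[OF _ \<open>B \<subseteq> ?C\<close>, of J "t m" \<gamma>] that I[OF \<open>m < l\<close>]
      by (simp add: restrict cut_sum_def)
  qed
  have "\<bar>\<Sum>i\<in>PiE {..<l} I. A i *
      (\<Sum>p\<in>?C. \<gamma> p * hybrid_ind l m i t p * spin_diff (t m) (i m) p)\<bar>
    = \<bar>\<Sum>g\<in>?R. \<Sum>y\<in>I m. A (g(m := y)) *
      (\<Sum>p\<in>?C. \<gamma> p * hybrid_ind l m g t p * spin_diff (t m) y p)\<bar>"
    using \<open>m < l\<close> by (simp add: sum_PiE_remove[of m] hybrid_upd)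
  also have "\<dots> \<le> (\<Sum>g\<in>?R. cut_disc n \<gamma>)"
    by (rule order_trans[OF sum_abs sum_mono[OF inner]])
  also have "\<dots> = real (card ?R) * cut_disc n \<gamma>"
    by simp
  also have "\<dots> \<le> real n ^ (l - 1) * cut_disc n \<gamma>"
  proof (rule mult_right_mono[OF _ cut_disc_nonneg])
    have "card ?R \<le> n ^ card ({..<l} - {m})"
      using I by (intro card_PiE_le_power) (auto intro: card_mono[of "{..<n}", simplified])
    then show "real (card ?R) \<le> real n ^ (l - 1)"
      using \<open>m < l\<close> by (simp flip: of_nat_power)
  qed
  finally show ?thesis .
qed

lemma abs_sum_pattern_prob_prod_diff_le:
  fixes \<mu> \<nu> :: "(nat \<Rightarrow> 'a::finite) \<Rightarrow> real" and \<tau> :: "nat \<Rightarrow> nat \<Rightarrow> 'a"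
  assumes \<mu>: "is_prob n \<mu>" and \<nu>: "is_prob n \<nu>" and \<gamma>: "\<gamma> \<in> couplings n \<mu> \<nu>"
    and I: "\<And>m. m < l \<Longrightarrow> I m \<subseteq> {..<n}"
  shows "\<bar>\<Sum>i\<in>PiE {..<l} I.
      (\<Prod>j<k. pattern_prob n l \<mu> i (\<tau> j)) - (\<Prod>j<k. pattern_prob n l \<nu> i (\<tau> j))\<bar>
    \<le> real k * real l * real n ^ (l - 1) * cut_disc n \<gamma>"
proof -
  define a where "a i j = pattern_prob n l \<mu> i (\<tau> j)" for i j
  define b where "b i j = pattern_prob n l \<nu> i (\<tau> j)" for i j
  define A where "A j i = (\<Prod>j'<j. b i j') * (\<Prod>j'\<in>{j<..<k}. a i j')" for j i
  define H where "H j m i = (\<Sum>p\<in>configs n \<times> configs n.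
      \<gamma> p * hybrid_ind l m i (\<tau> j) p * spin_diff (\<tau> j m) (i m) p)" for j m i
  have A_bounds: "0 \<le> A j i \<and> A j i \<le> 1" for j i
    unfolding A_def a_def b_def using pattern_prob_bounds[OF \<mu>] pattern_prob_bounds[OF \<nu>]
    by (intro conjI mult_nonneg_nonneg mult_le_one prod_nonneg prod_le_1) auto
  have "(\<Prod>j<k. a i j) - (\<Prod>j<k. b i j) = (\<Sum>j<k. \<Sum>m<l. A j i * H j m i)" for i
    unfolding prod_lessThan_diff_telescope A_def H_def a_def b_def pattern_prob_diff_eq[OF \<gamma>]
    by (simp add: sum_distrib_left mult_ac)
  then have "(\<Sum>i\<in>PiE {..<l} I. (\<Prod>j<k. a i j) - (\<Prod>j<k. b i j))
      = (\<Sum>j<k. \<Sum>m<l. \<Sum>i\<in>PiE {..<l} I. A j i * H j m i)"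
    by (simp add: sum.swap[of _ "PiE {..<l} I"])
  then have "\<bar>\<Sum>i\<in>PiE {..<l} I. (\<Prod>j<k. a i j) - (\<Prod>j<k. b i j)\<bar>
      \<le> (\<Sum>j<k. \<Sum>m<l. \<bar>\<Sum>i\<in>PiE {..<l} I. A j i * H j m i\<bar>)"
    by (auto intro: order_trans[OF sum_abs] sum_mono sum_abs)
  also have "\<dots> \<le> (\<Sum>j<k. \<Sum>m<l. real n ^ (l - 1) * cut_disc n \<gamma>)"
    unfolding H_def using I A_bounds by (intro sum_mono abs_hybrid_sum_le) auto
  finally show ?thesis
    by (simp add: a_def b_def)
qed

lemma expect_intensive_eq:
  fixes \<mu> :: "(nat \<Rightarrow> 'a::finite) \<Rightarrow> real" and \<tau> :: "nat \<Rightarrow> nat \<Rightarrow> 'a"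
  assumes f: "\<forall>\<sigma>\<in>tuples n k. f \<sigma> = (1 / real n ^ l) *
      (\<Sum>i\<in>PiE {..<l} I. \<Prod>j<k. (if (\<forall>m<l. \<sigma> j (i m) = \<tau> j m) then 1 else 0))"
  shows "expect n k \<mu> f = (1 / real n ^ l) * (\<Sum>i\<in>PiE {..<l} I. \<Prod>j<k. pattern_prob n l \<mu> i (\<tau> j))"
proof -
  have match: "(if \<forall>m<l. s (i m) = \<tau> j m then 1 else 0) = match_ind {..<l} i (\<tau> j) s" for s i j
    by (auto simp: match_ind_eq_of_bool)
  have "expect n k \<mu> f = (\<Sum>\<sigma>\<in>tuples n k. (1 / real n ^ l) *
      (\<Sum>i\<in>PiE {..<l} I. \<Prod>j<k. match_ind {..<l} i (\<tau> j) (\<sigma> j)) * (\<Prod>j<k. \<mu> (\<sigma> j)))"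
    unfolding expect_def using f by (intro sum.cong) (auto simp: match)
  also have "\<dots> = (1 / real n ^ l) * (\<Sum>\<sigma>\<in>tuples n k. \<Sum>i\<in>PiE {..<l} I.
      \<Prod>j<k. \<mu> (\<sigma> j) * match_ind {..<l} i (\<tau> j) (\<sigma> j))"
    by (simp add: sum_distrib_left sum_distrib_right prod.distrib mult_ac)
  also have "\<dots> = (1 / real n ^ l) * (\<Sum>i\<in>PiE {..<l} I. \<Sum>\<sigma>\<in>tuples n k.
      \<Prod>j<k. \<mu> (\<sigma> j) * match_ind {..<l} i (\<tau> j) (\<sigma> j))"
    by (subst sum.swap) (rule refl)
  also have "\<dots> = (1 / real n ^ l) * (\<Sum>i\<in>PiE {..<l} I. \<Prod>j<k. pattern_prob n l \<mu> i (\<tau> j))"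
    unfolding tuples_def pattern_prob_def by (subst prod_sum_PiE) (auto intro: finite_configs)
  finally show ?thesis .
qed

lemma abs_expect_diff_le_cut_disc:
  fixes \<mu> \<nu> :: "(nat \<Rightarrow> 'a::finite) \<Rightarrow> real"
  assumes \<mu>: "is_prob n \<mu>" and \<nu>: "is_prob n \<nu>" and \<gamma>: "\<gamma> \<in> couplings n \<mu> \<nu>"
    and f: "intensive_obs n k l f" and "0 < n" "1 \<le> l"
  shows "\<bar>expect n k \<mu> f - expect n k \<nu> f\<bar> \<le> real k * real l * cut_disc n \<gamma> / real n"
proof -
  obtain I :: "nat \<Rightarrow> nat set" and \<tau> :: "nat \<Rightarrow> nat \<Rightarrow> 'a" where
    I: "\<forall>m<l. I m \<subseteq> {..<n}" and f_eq: "\<forall>\<sigma>\<in>tuples n k. f \<sigma> = (1 / real n ^ l) *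
      (\<Sum>i\<in>PiE {..<l} I. \<Prod>j<k. (if (\<forall>m<l. \<sigma> j (i m) = \<tau> j m) then 1 else 0))"
    using f unfolding intensive_obs_def by blast
  have "\<bar>expect n k \<mu> f - expect n k \<nu> f\<bar> = \<bar>\<Sum>i\<in>PiE {..<l} I.
      (\<Prod>j<k. pattern_prob n l \<mu> i (\<tau> j)) - (\<Prod>j<k. pattern_prob n l \<nu> i (\<tau> j))\<bar> / real n ^ l"
    unfolding expect_intensive_eq[OF f_eq]
    by (simp add: sum_subtractf diff_divide_distrib[symmetric] abs_divide)
  also have "\<dots> \<le> real k * real l * real n ^ (l - 1) * cut_disc n \<gamma> / real n ^ l"
    using I by (intro divide_right_mono abs_sum_pattern_prob_prod_diff_le[OF \<mu> \<nu> \<gamma>]) auto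
  also have "\<dots> = real k * real l * cut_disc n \<gamma> / real n"
  proof -
    have "real n ^ l = real n * real n ^ (l - 1)"
      using \<open>1 \<le> l\<close> by (cases l) auto
    then show ?thesis
      using \<open>0 < n\<close> by simp
  qed
  finally show ?thesis .
qed

lemma abs_expect_diff_le_cut_dist:
  fixes \<mu> \<nu> :: "(nat \<Rightarrow> 'a::finite) \<Rightarrow> real"
  assumes \<mu>: "is_prob n \<mu>" and \<nu>: "is_prob n \<nu>" and f: "intensive_obs n k l f"
    and "0 < n" "1 \<le> l"
  shows "\<bar>expect n k \<mu> f - expect n k \<nu> f\<bar> \<le> real k * real l * cut_dist n \<mu> \<nu>"
proof (cases "k = 0")
  case True
  then show ?thesis
    using abs_expect_diff_le_cut_disc[OF \<mu> \<nu> product_coupling[OF \<mu> \<nu>] f \<open>0 < n\<close> \<open>1 \<le> l\<close>] by simp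
next
  case False
  define c where "c = real k * real l / real n"
  have c: "0 < c"
    using False \<open>0 < n\<close> \<open>1 \<le> l\<close> by (simp add: c_def)
  have "\<bar>expect n k \<mu> f - expect n k \<nu> f\<bar> / c \<le> cut_disc n \<gamma>" if "\<gamma> \<in> couplings n \<mu> \<nu>" for \<gamma>
  proof -
    have "\<bar>expect n k \<mu> f - expect n k \<nu> f\<bar> \<le> cut_disc n \<gamma> * c"
      using abs_expect_diff_le_cut_disc[OF \<mu> \<nu> that f \<open>0 < n\<close> \<open>1 \<le> l\<close>] by (simp add: c_def mult_ac)
    then show ?thesis
      by (simp add: pos_divide_le_eq[OF c])
  qed
  then have "\<bar>expect n k \<mu> f - expect n k \<nu> f\<bar> / c \<le> (INF \<gamma>\<in>couplings n \<mu> \<nu>. cut_disc n \<gamma>)"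
    using product_coupling[OF \<mu> \<nu>] by (intro cINF_greatest) auto
  then have "\<bar>expect n k \<mu> f - expect n k \<nu> f\<bar> \<le> c * (INF \<gamma>\<in>couplings n \<mu> \<nu>. cut_disc n \<gamma>)"
    by (simp add: pos_divide_le_eq[OF c] mult.commute)
  also have "\<dots> = real k * real l * cut_dist n \<mu> \<nu>"
    by (simp add: c_def cut_dist_def)
  finally show ?thesis .
qed

theorem corollary2p7:
  fixes \<epsilon> :: real and k l :: nat
  assumes "CARD('a) \<ge> 2" and "\<epsilon> > 0" and "k \<ge> 1" and "l \<ge> 1"
  shows "\<exists>\<delta>>0. \<exists>n0>(0::nat). \<forall>n>n0. \<forall>(\<mu> :: (nat \<Rightarrow> 'a::finite) \<Rightarrow> real) \<nu>.
           is_prob n \<mu> \<longrightarrow> is_prob n \<nu> \<longrightarrow> cut_dist n \<mu> \<nu> < \<delta> \<longrightarrow>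
           (\<forall>f. intensive_obs n k l f \<longrightarrow> \<bar>expect n k \<mu> f - expect n k \<nu> f\<bar> < \<epsilon>)"
proof -
  define \<delta> where "\<delta> = \<epsilon> / (real k * real l)"
  have kl: "0 < real k * real l"
    using assms by simp
  have "\<bar>expect n k \<mu> f - expect n k \<nu> f\<bar> < \<epsilon>"
    if "0 < n" "is_prob n \<mu>" "is_prob n \<nu>" "cut_dist n \<mu> \<nu> < \<delta>" "intensive_obs n k l f"
    for n and \<mu> \<nu> :: "(nat \<Rightarrow> 'a) \<Rightarrow> real" and f
  proof -
    have "\<bar>expect n k \<mu> f - expect n k \<nu> f\<bar> \<le> real k * real l * cut_dist n \<mu> \<nu>"
      using abs_expect_diff_le_cut_dist that \<open>l \<ge> 1\<close> by blast
    also have "\<dots> < real k * real l * \<delta>"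
      by (rule mult_strict_left_mono[OF that(4) kl])
    also have "\<dots> = \<epsilon>"
      using \<open>k \<ge> 1\<close> \<open>l \<ge> 1\<close> by (simp add: \<delta>_def)
    finally show ?thesis .
  qed
  moreover have "0 < \<delta>"
    using kl \<open>\<epsilon> > 0\<close> by (simp add: \<delta>_def)
  ultimately show ?thesis
    by (intro exI[of _ \<delta>] exI[of _ "1::nat"]) auto
qed

end
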